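(* Let $n\ge 1$ and let $\mathcal{Z}=\{(\boldsymbol{z}_i,y_i)\}_{i=1}^{n}$ be a finite set of labeled representations with $\boldsymbol{z}_i\in\mathbb{R}^{d}$, $\|\boldsymbol{z}_i\|_2=1$ for all $i$, and labels $y_i\in\{1,\dots,N_C\}$, every one of the $N_C$ classes being nonempty. For each class $j$ let $\mathcal{C}_j=\{\boldsymbol{z}_i : y_i=j\}$ and let the prototype be $\boldsymbol{c}_j=\frac{1}{|\mathcal{C}_j|}\sum_{\boldsymbol{z}\in\mathcal{C}_j}\boldsymbol{z}$. Let the similarity measure $d(\cdot,\cdot)$ be the cosine similarity, and consider the nearest centroid classifier loss \[ \mathcal{L}(\theta)=-\frac{1}{n}\sum_{i=1}^{n}\log\frac{e^{d(\boldsymbol{z}_i,\boldsymbol{c}_{y_i})}}{\sum_{j=1}^{N_C}e^{d(\boldsymbol{z}_i,\boldsymbol{c}_j)}}. \] Then \[ \mathcal{L}(\theta)\ \ge\ -\frac{1}{n}\sum_{i=1}^{n}\boldsymbol{z}_i^{\top}\boldsymbol{c}_{y_i}+\frac{\alpha}{n}\sum_{i=1}^{n}\sum_{\boldsymbol{z}'\in\mathcal{Z}}\boldsymbol{z}_i^{\top}\boldsymbol{z}', \] where $\boldsymbol{z}'$ ranges over (an independent copy of) the representations in $\mathcal{Z}$, and $\alpha$ is any constant satisfying $0\le\alpha<\frac{1}{N_C|\mathcal{C}_j|}$ for all $j$.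
   Context: The representations $\boldsymbol{z}_i$ are obtained as $\boldsymbol{z}_i=h_\theta(f_{\phi^*}(\boldsymbol{x}_i))$ from a frozen backbone $f_{\phi^*}$ and a trainable head $h_\theta$ with parameters $\theta$; the loss is viewed as a function of $\theta$. In the bound, $\boldsymbol{c}_{y_i}$ denotes the prototype of the class of sample $i$. *)

theory Defs
  imports "HOL-Analysis.Analysis"
begin

definition cos_sim :: "'a::real_inner \<Rightarrow> 'a \<Rightarrow> real" where
  "cos_sim x y = inner x y / (norm x * norm y)"

definition class_idx :: "nat \<Rightarrow> (nat \<Rightarrow> nat) \<Rightarrow> nat \<Rightarrow> nat set" where
  "class_idx n y j = {i \<in> {1..n}. y i = j}"

definition prototype :: "nat \<Rightarrow> (nat \<Rightarrow> 'a::real_vector) \<Rightarrow> (nat \<Rightarrow> nat) \<Rightarrow> nat \<Rightarrow> 'a" where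
  "prototype n z y j = (1 / real (card (class_idx n y j))) *\<^sub>R (\<Sum>i\<in>class_idx n y j. z i)"

definition ncc_loss :: "nat \<Rightarrow> nat \<Rightarrow> (nat \<Rightarrow> 'a::real_inner) \<Rightarrow> (nat \<Rightarrow> nat) \<Rightarrow> real" where
  "ncc_loss n NC z y =
     - (1 / real n) * (\<Sum>i=1..n.
         ln (exp (cos_sim (z i) (prototype n z y (y i))) /
             (\<Sum>j=1..NC. exp (cos_sim (z i) (prototype n z y j)))))"

end

theory Submission
  imports Defs
begin

text \<open>The loss is nonnegative, since every softmax probability is at most 1, and the right-hand
side is never positive. Indeed, with \<open>S = \<Sum>\<^sub>i z\<^sub>i = \<Sum>\<^sub>j |C\<^sub>j| c\<^sub>j\<close>, the double sum equals
\<open>\<parallel>S\<parallel>\<^sup>2\<close> and the prototype term equals \<open>\<Sum>\<^sub>j |C\<^sub>j| \<parallel>c\<^sub>j\<parallel>\<^sup>2\<close>. By Cauchy-Schwarz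
\<open>\<parallel>S\<parallel>\<^sup>2 \<le> N\<^sub>C \<Sum>\<^sub>j |C\<^sub>j|\<^sup>2 \<parallel>c\<^sub>j\<parallel>\<^sup>2\<close>, and \<open>\<alpha> N\<^sub>C |C\<^sub>j| \<le> 1\<close> then gives
\<open>\<alpha> \<parallel>S\<parallel>\<^sup>2 \<le> \<Sum>\<^sub>j |C\<^sub>j| \<parallel>c\<^sub>j\<parallel>\<^sup>2\<close>.\<close>

lemma ln_softmax_nonpos:
  fixes f :: "'b \<Rightarrow> real"
  assumes "finite J" and "j \<in> J"
  shows "ln (exp (f j) / (\<Sum>k\<in>J. exp (f k))) \<le> 0"
proof -
  have le: "exp (f j) \<le> (\<Sum>k\<in>J. exp (f k))"
    using assms by (intro member_le_sum) auto
  then have "0 < (\<Sum>k\<in>J. exp (f k))"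
    using exp_gt_zero order_less_le_trans by blast
  with le show ?thesis by (simp add: ln_div ln_ge_iff)
qed

lemma ncc_loss_nonneg:
  assumes "\<And>i. i \<in> {1..n} \<Longrightarrow> y i \<in> {1..NC}"
  shows "0 \<le> ncc_loss n NC z y"
proof -
  have "(\<Sum>i=1..n. ln (exp (cos_sim (z i) (prototype n z y (y i))) /
          (\<Sum>j=1..NC. exp (cos_sim (z i) (prototype n z y j))))) \<le> 0"
    using assms by (intro sum_nonpos ln_softmax_nonpos) auto
  then show ?thesis
    unfolding ncc_loss_def by (simp add: divide_nonpos_nonneg)
qed

lemma norm_sum_squared_le_card_sum_norm_squared:
  fixes v :: "'b \<Rightarrow> 'a::real_normed_vector"
  shows "(norm (\<Sum>j\<in>J. v j))\<^sup>2 \<le> real (card J) * (\<Sum>j\<in>J. (norm (v j))\<^sup>2)"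
proof -
  have "(norm (\<Sum>j\<in>J. v j))\<^sup>2 \<le> (\<Sum>j\<in>J. norm (v j))\<^sup>2"
    by (intro power_mono norm_sum) simp
  also have "\<dots> \<le> (\<Sum>j\<in>J. (norm (v j))\<^sup>2) * real (card J)"
    by (rule sum_squared_le_sum_of_squares)
  finally show ?thesis by (simp add: mult.commute)
qed

lemma sum_sum_inner_eq_norm_sum_squared:
  fixes z :: "'b \<Rightarrow> 'a::real_inner"
  shows "(\<Sum>i\<in>A. \<Sum>k\<in>A. inner (z i) (z k)) = (norm (\<Sum>i\<in>A. z i))\<^sup>2"
  by (simp add: power2_norm_eq_inner inner_sum_left inner_sum_right) (rule sum.swap)

lemma finite_class_idx [simp]: "finite (class_idx n y j)"
  unfolding class_idx_def by simp

lemma sum_over_classes: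
  assumes "\<And>i. i \<in> {1..n} \<Longrightarrow> y i \<in> {1..NC}"
  shows "(\<Sum>j=1..NC. \<Sum>i\<in>class_idx n y j. f i) = (\<Sum>i=1..n. f i)"
  unfolding class_idx_def using assms by (intro sum.group) auto

lemma card_scaleR_prototype:
  assumes "class_idx n y j \<noteq> {}"
  shows "real (card (class_idx n y j)) *\<^sub>R prototype n z y j = (\<Sum>i\<in>class_idx n y j. z i)"
  using assms by (simp add: prototype_def)

lemma sum_eq_sum_card_scaleR_prototype:
  assumes "\<And>i. i \<in> {1..n} \<Longrightarrow> y i \<in> {1..NC}"
    and "\<And>j. j \<in> {1..NC} \<Longrightarrow> class_idx n y j \<noteq> {}"
  shows "(\<Sum>i=1..n. z i) = (\<Sum>j=1..NC. real (card (class_idx n y j)) *\<^sub>R prototype n z y j)"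
proof -
  have "(\<Sum>i=1..n. z i) = (\<Sum>j=1..NC. \<Sum>i\<in>class_idx n y j. z i)"
    by (rule sum_over_classes[OF assms(1), symmetric])
  also have "\<dots> = (\<Sum>j=1..NC. real (card (class_idx n y j)) *\<^sub>R prototype n z y j)"
    using assms(2) by (intro sum.cong) (simp_all add: card_scaleR_prototype)
  finally show ?thesis .
qed

lemma sum_inner_prototype:
  fixes z :: "nat \<Rightarrow> 'a::real_inner"
  assumes "\<And>i. i \<in> {1..n} \<Longrightarrow> y i \<in> {1..NC}"
    and "\<And>j. j \<in> {1..NC} \<Longrightarrow> class_idx n y j \<noteq> {}"
  shows "(\<Sum>i=1..n. inner (z i) (prototype n z y (y i)))
           = (\<Sum>j=1..NC. real (card (class_idx n y j)) * (norm (prototype n z y j))\<^sup>2)"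
proof -
  have "(\<Sum>i=1..n. inner (z i) (prototype n z y (y i)))
          = (\<Sum>j=1..NC. \<Sum>i\<in>class_idx n y j. inner (z i) (prototype n z y (y i)))"
    by (rule sum_over_classes[OF assms(1), symmetric])
  also have "\<dots> = (\<Sum>j=1..NC. inner (\<Sum>i\<in>class_idx n y j. z i) (prototype n z y j))"
    by (simp add: inner_sum_left class_idx_def)
  also have "\<dots> = (\<Sum>j=1..NC. real (card (class_idx n y j)) * (norm (prototype n z y j))\<^sup>2)"
    using assms(2) by (intro sum.cong) (simp_all flip: card_scaleR_prototype add: power2_norm_eq_inner)
  finally show ?thesis .
qed

lemma scaled_norm_sum_squared_le_sum_inner_prototype:
  fixes z :: "nat \<Rightarrow> 'a::real_inner"
  assumes labels: "\<And>i. i \<in> {1..n} \<Longrightarrow> y i \<in> {1..NC}"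
    and nonempty: "\<And>j. j \<in> {1..NC} \<Longrightarrow> class_idx n y j \<noteq> {}"
    and "0 \<le> \<alpha>"
    and small: "\<And>j. j \<in> {1..NC} \<Longrightarrow> \<alpha> * real NC * real (card (class_idx n y j)) \<le> 1"
  shows "\<alpha> * (norm (\<Sum>i=1..n. z i))\<^sup>2 \<le> (\<Sum>i=1..n. inner (z i) (prototype n z y (y i)))"
proof -
  let ?m = "\<lambda>j. real (card (class_idx n y j))" and ?c = "prototype n z y"
  have "\<alpha> * (norm (\<Sum>i=1..n. z i))\<^sup>2 = \<alpha> * (norm (\<Sum>j=1..NC. ?m j *\<^sub>R ?c j))\<^sup>2"
    using sum_eq_sum_card_scaleR_prototype[OF labels nonempty, of z] by simp
  also have "\<dots> \<le> \<alpha> * (real NC * (\<Sum>j=1..NC. (norm (?m j *\<^sub>R ?c j))\<^sup>2))"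
    using norm_sum_squared_le_card_sum_norm_squared[of "\<lambda>j. ?m j *\<^sub>R ?c j" "{1..NC}"]
    by (intro mult_left_mono \<open>0 \<le> \<alpha>\<close>) simp
  also have "\<dots> = (\<Sum>j=1..NC. (\<alpha> * real NC * ?m j) * (?m j * (norm (?c j))\<^sup>2))"
    by (simp add: sum_distrib_left power_mult_distrib power2_eq_square algebra_simps)
  also have "\<dots> \<le> (\<Sum>j=1..NC. ?m j * (norm (?c j))\<^sup>2)"
    using small \<open>0 \<le> \<alpha>\<close> by (intro sum_mono mult_left_le_one_le) auto
  also have "\<dots> = (\<Sum>i=1..n. inner (z i) (prototype n z y (y i)))"
    by (rule sum_inner_prototype[OF labels nonempty, symmetric])
  finally show ?thesis .
qed

theorem theorem1:
  fixes n NC :: nat and z :: "nat \<Rightarrow> real ^ 'd" and y :: "nat \<Rightarrow> nat" and \<alpha> :: real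
  assumes "n \<ge> 1"
    and "\<And>i. i \<in> {1..n} \<Longrightarrow> norm (z i) = 1"
    and "\<And>i. i \<in> {1..n} \<Longrightarrow> y i \<in> {1..NC}"
    and "\<And>j. j \<in> {1..NC} \<Longrightarrow> class_idx n y j \<noteq> {}"
    and "0 \<le> \<alpha>"
    and "\<And>j. j \<in> {1..NC} \<Longrightarrow> \<alpha> < 1 / (real NC * real (card (class_idx n y j)))"
  shows "ncc_loss n NC z y \<ge>
           - (1 / real n) * (\<Sum>i=1..n. inner (z i) (prototype n z y (y i)))
           + (\<alpha> / real n) * (\<Sum>i=1..n. \<Sum>k=1..n. inner (z i) (z k))"
proof -
  have "\<alpha> * real NC * real (card (class_idx n y j)) \<le> 1" if "j \<in> {1..NC}" for j
    using assms(4,6)[OF that] that by (simp add: card_gt_0_iff less_divide_eq mult.assoc)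
  then have "\<alpha> * (\<Sum>i=1..n. \<Sum>k=1..n. inner (z i) (z k))
               \<le> (\<Sum>i=1..n. inner (z i) (prototype n z y (y i)))"
    using scaled_norm_sum_squared_le_sum_inner_prototype[OF assms(3,4,5)]
    by (simp add: sum_sum_inner_eq_norm_sum_squared)
  then have "- (1 / real n) * (\<Sum>i=1..n. inner (z i) (prototype n z y (y i)))
               + (\<alpha> / real n) * (\<Sum>i=1..n. \<Sum>k=1..n. inner (z i) (z k)) \<le> 0"
    using \<open>n \<ge> 1\<close> by (simp add: field_simps)
  moreover from assms(3) have "0 \<le> ncc_loss n NC z y"
    by (rule ncc_loss_nonneg)
  ultimately show ?thesis by linarith
qed

end
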